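(* Let $G$ be a connected graph. Then $KB_e(G)$ is connected if and only if there is no set of vertices $S \subsetneq V(G)$ such that (i) $N_{\overline{S}}(v)=N_{\overline{S}}(w)$ for every $v,w\in S$, and (ii) the induced subgraph $G[S]$ has at least one edge.
   Context: All graphs are finite, simple and undirected. A biclique of a graph $G$ is a maximal (with respect to inclusion) induced subgraph of $G$ that is a complete bipartite graph $K_{p,q}$ with $p,q\ge 1$. The edge-biclique graph $KB_e(G)$ is the graph with one vertex for each biclique of $G$, in which two distinct vertices are adjacent if and only if the corresponding bicliques of $G$ have at least one edge in common. For $S\subseteq V(G)$, $\overline{S}=V(G)\setminus S$, and for a vertex $v$, $N_{\overline{S}}(v)=N(v)\cap \overline{S}$ is the set of neighbours of $v$ lying in $\overline{S}$. *)

theory Defs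
  imports Main
begin

definition simple_graph :: "'a set \<Rightarrow> ('a \<Rightarrow> 'a \<Rightarrow> bool) \<Rightarrow> bool" where
  "simple_graph V E \<longleftrightarrow> finite V \<and> (\<forall>u v. E u v \<longrightarrow> u \<in> V \<and> v \<in> V)
     \<and> (\<forall>u v. E u v \<longrightarrow> E v u) \<and> (\<forall>v. \<not> E v v)"

definition connected_on :: "'b set \<Rightarrow> ('b \<Rightarrow> 'b \<Rightarrow> bool) \<Rightarrow> bool" where
  "connected_on W R \<longleftrightarrow>
     (\<forall>u\<in>W. \<forall>v\<in>W. (\<lambda>x y. x \<in> W \<and> y \<in> W \<and> R x y)\<^sup>*\<^sup>* u v)"

definition connected_graph :: "'a set \<Rightarrow> ('a \<Rightarrow> 'a \<Rightarrow> bool) \<Rightarrow> bool" where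
  "connected_graph V E \<longleftrightarrow> V \<noteq> {} \<and> connected_on V E"

definition induces_complete_bipartite :: "('a \<Rightarrow> 'a \<Rightarrow> bool) \<Rightarrow> 'a set \<Rightarrow> bool" where
  "induces_complete_bipartite E B \<longleftrightarrow>
     (\<exists>X Y. X \<noteq> {} \<and> Y \<noteq> {} \<and> X \<inter> Y = {} \<and> B = X \<union> Y
        \<and> (\<forall>x\<in>X. \<forall>y\<in>Y. E x y)
        \<and> (\<forall>x\<in>X. \<forall>x'\<in>X. \<not> E x x')
        \<and> (\<forall>y\<in>Y. \<forall>y'\<in>Y. \<not> E y y'))"

definition biclique :: "'a set \<Rightarrow> ('a \<Rightarrow> 'a \<Rightarrow> bool) \<Rightarrow> 'a set \<Rightarrow> bool" where
  "biclique V E B \<longleftrightarrow> B \<subseteq> V \<and> induces_complete_bipartite E B \<and>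
     (\<forall>B'. B \<subseteq> B' \<and> B' \<subseteq> V \<and> induces_complete_bipartite E B' \<longrightarrow> B' = B)"

definition bicliques :: "'a set \<Rightarrow> ('a \<Rightarrow> 'a \<Rightarrow> bool) \<Rightarrow> 'a set set" where
  "bicliques V E = {B. biclique V E B}"

text \<open>Two bicliques share an edge (edges of a biclique = edges of G induced on it).\<close>
definition share_edge :: "('a \<Rightarrow> 'a \<Rightarrow> bool) \<Rightarrow> 'a set \<Rightarrow> 'a set \<Rightarrow> bool" where
  "share_edge E B B' \<longleftrightarrow> (\<exists>u v. u \<in> B \<and> v \<in> B \<and> u \<in> B' \<and> v \<in> B' \<and> E u v)"

definition KBe_adj :: "('a \<Rightarrow> 'a \<Rightarrow> bool) \<Rightarrow> 'a set \<Rightarrow> 'a set \<Rightarrow> bool" where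
  "KBe_adj E B B' \<longleftrightarrow> B \<noteq> B' \<and> share_edge E B B'"

definition KBe_connected :: "'a set \<Rightarrow> ('a \<Rightarrow> 'a \<Rightarrow> bool) \<Rightarrow> bool" where
  "KBe_connected V E \<longleftrightarrow> connected_on (bicliques V E) (KBe_adj E)"

definition nbhd_outside :: "'a set \<Rightarrow> ('a \<Rightarrow> 'a \<Rightarrow> bool) \<Rightarrow> 'a set \<Rightarrow> 'a \<Rightarrow> 'a set" where
  "nbhd_outside V E S v = {u \<in> V - S. E v u}"

end

theory Submission
  imports Defs
begin

text \<open>
  Call two oriented edges one step apart if they are reverses of each other or form an induced
  path \<open>y - x - z\<close> with common tail \<open>x\<close>. Such edges lie in a common biclique, and bicliques
  sharing an edge are adjacent in \<open>KB\<^sub>e(G)\<close>, so \<open>KB\<^sub>e(G)\<close> is connected iff all edges are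
  equivalent under these steps.

  Given a set \<open>S\<close> as in the theorem, a vertex outside \<open>S\<close> sees both or neither end of an edge
  inside \<open>S\<close>, so every biclique containing such an edge lies in \<open>S\<close>; as \<open>G\<close> is connected, some
  edge leaves \<open>S\<close>, and its bicliques are unreachable.

  Otherwise, connectivity of \<open>G\<close> yields two inequivalent edges at a common vertex; they span a
  triangle with an edge \<open>bc\<close> inequivalent to the other two. The vertices of the class of \<open>bc\<close>
  form the required set: pivots force them to have equal outside neighbourhoods, and the apex of
  the triangle never meets the class.
\<close>

locale finite_simple_graph =
  fixes V :: "'a set" and E :: "'a \<Rightarrow> 'a \<Rightarrow> bool"
  assumes finite_vertices: "finite V"
    and edge_vertices: "E u v \<Longrightarrow> u \<in> V \<and> v \<in> V"
    and edge_sym: "E u v \<Longrightarrow> E v u"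
    and edge_irrefl: "\<not> E v v"

lemma simple_graph_imp_finite_simple_graph:
  "simple_graph V E \<Longrightarrow> finite_simple_graph V E"
  unfolding simple_graph_def finite_simple_graph_def by blast

definition graph_module :: "'a set \<Rightarrow> ('a \<Rightarrow> 'a \<Rightarrow> bool) \<Rightarrow> 'a set \<Rightarrow> bool" where
  "graph_module V E S \<longleftrightarrow> (\<forall>v\<in>S. \<forall>w\<in>S. nbhd_outside V E S v = nbhd_outside V E S w)"

abbreviation KBe_reach :: "'a set \<Rightarrow> ('a \<Rightarrow> 'a \<Rightarrow> bool) \<Rightarrow> 'a set \<Rightarrow> 'a set \<Rightarrow> bool" where
  "KBe_reach V E \<equiv> (\<lambda>B B'. B \<in> bicliques V E \<and> B' \<in> bicliques V E \<and> KBe_adj E B B')\<^sup>*\<^sup>*"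

lemma KBe_connected_iff_reach:
  "KBe_connected V E \<longleftrightarrow> (\<forall>B\<in>bicliques V E. \<forall>B'\<in>bicliques V E. KBe_reach V E B B')"
  unfolding KBe_connected_def connected_on_def by (simp add: conj_assoc)

lemma rtranclp_leaves_set:
  assumes "R\<^sup>*\<^sup>* p q" "p \<in> S" "q \<notin> S"
  shows "\<exists>s t. R s t \<and> s \<in> S \<and> t \<notin> S"
  using assms by (induction rule: rtranclp_induct) auto

lemma induces_complete_bipartite_star:
  assumes "Y \<noteq> {}" "x \<notin> Y" "\<forall>y\<in>Y. E x y" "\<not> E x x" "\<forall>y\<in>Y. \<forall>y'\<in>Y. \<not> E y y'"
  shows "induces_complete_bipartite E (insert x Y)"
  unfolding induces_complete_bipartite_def
  using assms by (intro exI[of _ "{x}"] exI[of _ Y]) auto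

lemma complete_bipartite_extends_to_biclique:
  assumes "finite V" "B\<^sub>0 \<subseteq> V" "induces_complete_bipartite E B\<^sub>0"
  shows "\<exists>B. biclique V E B \<and> B\<^sub>0 \<subseteq> B"
proof -
  let ?F = "{B. B \<subseteq> V \<and> induces_complete_bipartite E B}"
  have "finite ?F"
    using assms(1) by (rule finite_subset[rotated, OF finite_Pow_iff[THEN iffD2]]) auto
  then obtain B where "B \<in> ?F" "B\<^sub>0 \<subseteq> B" "\<forall>B'\<in>?F. B \<subseteq> B' \<longrightarrow> B = B'"
    using finite_has_maximal2[of ?F B\<^sub>0] assms(2,3) by auto
  then show ?thesis unfolding biclique_def by blast
qed

lemma biclique_has_edge:
  assumes "B \<in> bicliques V E"
  shows "\<exists>x y. x \<in> B \<and> y \<in> B \<and> E x y"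
proof -
  obtain X Y where "X \<noteq> {}" "Y \<noteq> {}" "B = X \<union> Y" "\<forall>x\<in>X. \<forall>y\<in>Y. E x y"
    using assms unfolding bicliques_def biclique_def induces_complete_bipartite_def by auto
  then show ?thesis by blast
qed

lemma biclique_within_module:
  assumes sym: "symp E"
    and B: "induces_complete_bipartite E B" "B \<subseteq> V"
    and xy: "x \<in> B" "y \<in> B" "E x y" "x \<in> S" "y \<in> S"
    and same_nbhd: "nbhd_outside V E S x = nbhd_outside V E S y"
  shows "B \<subseteq> S"
proof
  fix t assume "t \<in> B"
  obtain X Y where XY: "X \<inter> Y = {}" "B = X \<union> Y" "\<forall>x\<in>X. \<forall>y\<in>Y. E x y"
    "\<forall>x\<in>X. \<forall>x'\<in>X. \<not> E x x'" "\<forall>y\<in>Y. \<forall>y'\<in>Y. \<not> E y y'"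
    using B(1) unfolding induces_complete_bipartite_def by blast
  \<comment> \<open>\<open>x\<close> and \<open>y\<close> lie on opposite sides of \<open>B\<close>, so \<open>t\<close> is adjacent to exactly one of them.\<close>
  then have "E x t \<noteq> E y t"
    using xy(1-3) \<open>t \<in> B\<close> sympD[OF sym] by blast
  moreover have "t \<notin> S \<Longrightarrow> E x t = E y t"
    using same_nbhd B(2) \<open>t \<in> B\<close> unfolding nbhd_outside_def by blast
  ultimately show "t \<in> S" by blast
qed

context finite_simple_graph
begin

lemma symp_edges: "symp E"
  using edge_sym by (rule sympI)

lemma edge_in_biclique:
  assumes "E x y"
  shows "\<exists>B\<in>bicliques V E. x \<in> B \<and> y \<in> B"
proof -
  have "induces_complete_bipartite E {x, y}"
    using induces_complete_bipartite_star[of "{y}" x E] assms edge_irrefl by auto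
  then show ?thesis
    using complete_bipartite_extends_to_biclique[OF finite_vertices, of "{x, y}"] edge_vertices[OF assms]
    unfolding bicliques_def by auto
qed

lemma induced_path_in_biclique:
  assumes "E x y" "E x z" "y \<noteq> z" "\<not> E y z"
  shows "\<exists>B\<in>bicliques V E. x \<in> B \<and> y \<in> B \<and> z \<in> B"
proof -
  have "induces_complete_bipartite E {x, y, z}"
    using induces_complete_bipartite_star[of "{y, z}" x E] assms edge_irrefl edge_sym by auto
  then show ?thesis
    using complete_bipartite_extends_to_biclique[OF finite_vertices, of "{x, y, z}"]
      edge_vertices[OF assms(1)] edge_vertices[OF assms(2)]
    unfolding bicliques_def by auto
qed

lemma share_edge_KBe_reach:
  assumes "B \<in> bicliques V E" "B' \<in> bicliques V E" "x \<in> B" "y \<in> B" "x \<in> B'" "y \<in> B'" "E x y"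
  shows "KBe_reach V E B B'"
  using assms unfolding KBe_adj_def share_edge_def by (cases "B = B'") auto

lemma KBe_reach_within_module:
  assumes "graph_module V E S" "KBe_reach V E B B'" "B \<subseteq> S"
  shows "B' \<subseteq> S"
  using assms(2,3)
proof (induction rule: rtranclp_induct)
  case (step B' B'')
  obtain x y where xy: "x \<in> B'" "y \<in> B'" "x \<in> B''" "y \<in> B''" "E x y"
    using step(2) unfolding KBe_adj_def share_edge_def by blast
  have B'': "induces_complete_bipartite E B''" "B'' \<subseteq> V"
    using step(2) unfolding bicliques_def biclique_def by auto
  have "x \<in> S" "y \<in> S" using step.IH step.prems xy(1,2) by auto
  moreover have "nbhd_outside V E S x = nbhd_outside V E S y"
    using assms(1) calculation unfolding graph_module_def by blast
  ultimately show ?case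
    using biclique_within_module[OF symp_edges B'' xy(3-5)] by blast
qed

lemma module_not_KBe_connected:
  assumes conn: "connected_graph V E"
    and S: "S \<subset> V" "graph_module V E S" and uw: "u \<in> S" "w \<in> S" "E u w"
  shows "\<not> KBe_connected V E"
proof
  assume "KBe_connected V E"
  obtain t\<^sub>0 where "t\<^sub>0 \<in> V" "t\<^sub>0 \<notin> S" using S(1) by blast
  moreover have "u \<in> V" using uw(3) edge_vertices by blast
  ultimately have "(\<lambda>x y. x \<in> V \<and> y \<in> V \<and> E x y)\<^sup>*\<^sup>* u t\<^sub>0"
    using conn unfolding connected_graph_def connected_on_def by blast
  from rtranclp_leaves_set[OF this uw(1) \<open>t\<^sub>0 \<notin> S\<close>]
  obtain s t where st: "E s t" "s \<in> S" "t \<notin> S" by blast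
  obtain B\<^sub>1 where B\<^sub>1: "B\<^sub>1 \<in> bicliques V E" "u \<in> B\<^sub>1" "w \<in> B\<^sub>1"
    using edge_in_biclique[OF uw(3)] by blast
  obtain B\<^sub>2 where B\<^sub>2: "B\<^sub>2 \<in> bicliques V E" "s \<in> B\<^sub>2" "t \<in> B\<^sub>2"
    using edge_in_biclique[OF st(1)] by blast
  have B\<^sub>1_cb: "induces_complete_bipartite E B\<^sub>1" "B\<^sub>1 \<subseteq> V"
    using B\<^sub>1(1) unfolding bicliques_def biclique_def by auto
  have "nbhd_outside V E S u = nbhd_outside V E S w"
    using S(2) uw(1,2) unfolding graph_module_def by blast
  then have "B\<^sub>1 \<subseteq> S"
    by (rule biclique_within_module[OF symp_edges B\<^sub>1_cb B\<^sub>1(2,3) uw(3,1,2)])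
  moreover have "KBe_reach V E B\<^sub>1 B\<^sub>2"
    using \<open>KBe_connected V E\<close> B\<^sub>1(1) B\<^sub>2(1) unfolding KBe_connected_iff_reach by blast
  ultimately have "B\<^sub>2 \<subseteq> S" using KBe_reach_within_module[OF S(2)] by blast
  then show False using B\<^sub>2(3) st(3) by blast
qed

end

inductive edge_step :: "('a \<Rightarrow> 'a \<Rightarrow> bool) \<Rightarrow> 'a \<times> 'a \<Rightarrow> 'a \<times> 'a \<Rightarrow> bool" for E where
  flip: "E x y \<Longrightarrow> edge_step E (x, y) (y, x)"
| pivot: "E x y \<Longrightarrow> E x z \<Longrightarrow> y \<noteq> z \<Longrightarrow> \<not> E y z \<Longrightarrow> edge_step E (x, y) (x, z)"

abbreviation edge_equiv :: "('a \<Rightarrow> 'a \<Rightarrow> bool) \<Rightarrow> 'a \<times> 'a \<Rightarrow> 'a \<times> 'a \<Rightarrow> bool" where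
  "edge_equiv E \<equiv> (edge_step E)\<^sup>*\<^sup>*"

definition edge_class_vertices :: "('a \<Rightarrow> 'a \<Rightarrow> bool) \<Rightarrow> 'a \<times> 'a \<Rightarrow> 'a set" where
  "edge_class_vertices E p = {x. \<exists>y. edge_equiv E p (x, y)}"

context finite_simple_graph
begin

lemma symp_edge_step: "symp (edge_step E)"
proof (rule sympI)
  fix p q assume "edge_step E p q"
  then show "edge_step E q p"
    by cases (auto intro: edge_step.intros dest: edge_sym)
qed

lemma edge_equiv_sym: "edge_equiv E p q \<Longrightarrow> edge_equiv E q p"
  using sympD[OF symp_rtranclp[OF symp_edge_step]] .

lemma edge_equiv_flip: "E x y \<Longrightarrow> edge_equiv E (x, y) (y, x)"
  by (blast intro: edge_step.flip)

lemma edge_equiv_edge: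
  assumes "edge_equiv E p q" "E (fst p) (snd p)"
  shows "E (fst q) (snd q)"
  using assms
proof (induction rule: rtranclp_induct)
  case (step q r)
  from step(2) show ?case by cases (auto intro: edge_sym)
qed

lemma edge_step_in_biclique:
  assumes "edge_step E q r"
  shows "\<exists>B\<in>bicliques V E. fst q \<in> B \<and> snd q \<in> B \<and> fst r \<in> B \<and> snd r \<in> B"
  using assms by cases (auto dest: edge_in_biclique induced_path_in_biclique)

lemma edge_equiv_KBe_reach:
  assumes "edge_equiv E p q" "E (fst p) (snd p)"
    and "B \<in> bicliques V E" "fst p \<in> B" "snd p \<in> B"
    and "B' \<in> bicliques V E" "fst q \<in> B'" "snd q \<in> B'"
  shows "KBe_reach V E B B'"
  using assms(1,6-8)
proof (induction arbitrary: B' rule: rtranclp_induct)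
  case base
  then show ?case using share_edge_KBe_reach assms(2-5) by blast
next
  case (step q r)
  obtain B'' where B'': "B'' \<in> bicliques V E" "fst q \<in> B''" "snd q \<in> B''" "fst r \<in> B''" "snd r \<in> B''"
    using edge_step_in_biclique[OF step(2)] by blast
  have "E (fst r) (snd r)"
    using edge_equiv_edge[OF _ assms(2)] step(1,2) by (meson rtranclp.rtrancl_into_rtrancl)
  then have "KBe_reach V E B'' B'"
    using share_edge_KBe_reach[OF B''(1) step.prems(1) B''(4,5)] step.prems(2,3) by blast
  with step.IH[OF B''(1-3)] show ?case by (rule rtranclp_trans)
qed

lemma KBe_connected_if_edges_equiv:
  assumes "\<And>p q. E (fst p) (snd p) \<Longrightarrow> E (fst q) (snd q) \<Longrightarrow> edge_equiv E p q"
  shows "KBe_connected V E"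
  unfolding KBe_connected_iff_reach
proof (intro ballI)
  fix B B' assume B: "B \<in> bicliques V E" and B': "B' \<in> bicliques V E"
  obtain x y where "x \<in> B" "y \<in> B" "E x y" using biclique_has_edge[OF B] by blast
  moreover obtain x' y' where "x' \<in> B'" "y' \<in> B'" "E x' y'" using biclique_has_edge[OF B'] by blast
  ultimately show "KBe_reach V E B B'"
    using edge_equiv_KBe_reach[of "(x, y)" "(x', y')" B B'] assms B B' by auto
qed

lemma edges_equiv_if_locally_equiv:
  assumes conn: "connected_graph V E"
    and local: "\<And>u v w. E u v \<Longrightarrow> E u w \<Longrightarrow> edge_equiv E (u, v) (u, w)"
    and "E x y" "E x' y'"
  shows "edge_equiv E (x, y) (x', y')"
proof -
  have "(\<lambda>u v. u \<in> V \<and> v \<in> V \<and> E u v)\<^sup>*\<^sup>* x x'"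
    using conn edge_vertices assms(3,4) unfolding connected_graph_def connected_on_def by blast
  then have "\<forall>t. E x' t \<longrightarrow> edge_equiv E (x, y) (x', t)"
  proof (induction rule: rtranclp_induct)
    case base
    then show ?case using local assms(3) by blast
  next
    case (step z z')
    have "edge_equiv E (x, y) (z', z)"
      using step.IH step(2) edge_equiv_flip by (blast intro: rtranclp_trans)
    then show ?case
      using local step(2) edge_sym by (blast intro: rtranclp_trans)
  qed
  then show ?thesis using assms(4) by blast
qed

lemma separated_triangle:
  assumes uv: "E u v" and uw: "E u w" and "\<not> edge_equiv E (u, v) (u, w)"
  obtains a b c where "E a b" "E a c" "E b c"
    "\<not> edge_equiv E (b, c) (a, b)" "\<not> edge_equiv E (b, c) (a, c)"
proof -
  have "E v w"
  proof (rule ccontr)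
    assume "\<not> E v w"
    then have "edge_step E (u, v) (u, w)"
      using uv uw assms(3) by (intro edge_step.pivot) auto
    then show False using assms(3) by blast
  qed
  note sy = edge_equiv_sym
  note flips = edge_equiv_flip[OF uv] edge_equiv_flip[OF uw] edge_equiv_flip[OF \<open>E v w\<close>]
  consider (apex_v) "edge_equiv E (v, w) (u, v)"
    | (apex_w) "edge_equiv E (v, w) (u, w)"
    | (apex_u) "\<not> edge_equiv E (v, w) (u, v)" "\<not> edge_equiv E (v, w) (u, w)"
    by blast
  then show ?thesis
  proof cases
    case apex_v
    have "\<not> edge_equiv E (u, w) (v, u)"
    proof
      assume "edge_equiv E (u, w) (v, u)"
      then have "edge_equiv E (u, w) (u, v)" using sy[OF flips(1)] by (rule rtranclp_trans)
      then show False using assms(3) sy by blast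
    qed
    moreover have "\<not> edge_equiv E (u, w) (v, w)"
    proof
      assume "edge_equiv E (u, w) (v, w)"
      then have "edge_equiv E (u, w) (u, v)" using apex_v by (rule rtranclp_trans)
      then show False using assms(3) sy by blast
    qed
    ultimately show ?thesis using that[of v u w] edge_sym[OF uv] \<open>E v w\<close> uw by blast
  next
    case apex_w
    have "\<not> edge_equiv E (u, v) (w, u)"
    proof
      assume "edge_equiv E (u, v) (w, u)"
      then have "edge_equiv E (u, v) (u, w)" using sy[OF flips(2)] by (rule rtranclp_trans)
      then show False using assms(3) by blast
    qed
    moreover have "\<not> edge_equiv E (u, v) (w, v)"
    proof
      assume "edge_equiv E (u, v) (w, v)"
      then have "edge_equiv E (u, v) (v, w)" using sy[OF flips(3)] by (rule rtranclp_trans)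
      then have "edge_equiv E (u, v) (u, w)" using apex_w by (rule rtranclp_trans)
      then show False using assms(3) by blast
    qed
    ultimately show ?thesis using that[of w u v] edge_sym[OF uw] edge_sym[OF \<open>E v w\<close>] uv by blast
  next
    case apex_u
    then show ?thesis using that[of u v w] uv uw \<open>E v w\<close> by blast
  qed
qed

text \<open>Along the class of \<open>bc\<close> the apex stays adjacent to both ends: otherwise a pivot at the apex,
  or at the far end, would bring an edge at the apex into the class.\<close>

lemma apex_adjacent_along_class:
  assumes ab: "E a b" and ac: "E a c"
    and nab: "\<not> edge_equiv E (b, c) (a, b)" and nac: "\<not> edge_equiv E (b, c) (a, c)"
    and "edge_equiv E (b, c) q"
  shows "E a (fst q) \<and> E a (snd q) \<and>
    \<not> edge_equiv E (b, c) (a, fst q) \<and> \<not> edge_equiv E (b, c) (a, snd q)"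
  using assms(5)
proof (induction rule: rtranclp_induct)
  case base
  then show ?case using ab ac nab nac by simp
next
  case (step q r)
  from step(2) show ?case
  proof cases
    case (flip x y)
    then show ?thesis using step.IH by auto
  next
    case (pivot x y z)
    have IH: "E a x" "E a y" "\<not> edge_equiv E (b, c) (a, x)" "\<not> edge_equiv E (b, c) (a, y)"
      using step.IH pivot by auto
    have bc_xz: "edge_equiv E (b, c) (x, z)" using step(1,2) pivot by auto
    have az: "E a z"
    proof (rule ccontr)
      assume "\<not> E a z"
      moreover have "a \<noteq> z" using IH(2) pivot edge_sym by blast
      ultimately have "edge_step E (x, a) (x, z)"
        using pivot IH(1) edge_sym by (intro edge_step.pivot) auto
      with edge_equiv_flip[OF IH(1)] have "edge_equiv E (a, x) (x, z)"
        by (rule rtranclp.rtrancl_into_rtrancl)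
      then have "edge_equiv E (b, c) (a, x)"
        using bc_xz edge_equiv_sym by (blast intro: rtranclp_trans)
      then show False using IH(3) by blast
    qed
    have "\<not> edge_equiv E (b, c) (a, z)"
    proof
      assume "edge_equiv E (b, c) (a, z)"
      moreover have "edge_step E (a, z) (a, y)"
        using pivot az IH(2) edge_sym by (intro edge_step.pivot) auto
      ultimately show False using IH(4) by (meson rtranclp.rtrancl_into_rtrancl)
    qed
    then show ?thesis using pivot IH az by auto
  qed
qed

lemma apex_not_in_edge_class:
  assumes "E a b" "E a c" "\<not> edge_equiv E (b, c) (a, b)" "\<not> edge_equiv E (b, c) (a, c)"
  shows "a \<notin> edge_class_vertices E (b, c)"
  using apex_adjacent_along_class[OF assms] edge_irrefl
  unfolding edge_class_vertices_def by fastforce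

lemma edge_class_vertices_module:
  assumes edge: "E (fst p) (snd p)"
  shows "graph_module V E (edge_class_vertices E p)"
proof -
  let ?S = "edge_class_vertices E p"
  have rev: "edge_equiv E p (y, x)" if "edge_equiv E p (x, y)" for x y
  proof -
    have "E x y" using edge_equiv_edge[OF that edge] by simp
    then show ?thesis using that by (blast intro: rtranclp.rtrancl_into_rtrancl edge_step.flip)
  qed
  have snd_in: "y \<in> ?S" if "edge_equiv E p (x, y)" for x y
    using rev[OF that] unfolding edge_class_vertices_def by blast
  \<comment> \<open>A neighbour \<open>t\<close> of \<open>x\<close> missed by \<open>y\<close> would put \<open>(x, t)\<close> into the class by a pivot.\<close>
  have adj: "E x t \<Longrightarrow> E y t" if xy: "edge_equiv E p (x, y)" and "t \<notin> ?S" for x y t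
  proof (rule ccontr)
    assume "E x t" "\<not> E y t"
    moreover have "y \<noteq> t" using snd_in[OF xy] \<open>t \<notin> ?S\<close> by blast
    ultimately have "edge_step E (x, y) (x, t)"
      using edge_equiv_edge[OF xy edge] by (intro edge_step.pivot) auto
    then have "t \<in> ?S" using xy snd_in by (meson rtranclp.rtrancl_into_rtrancl)
    with \<open>t \<notin> ?S\<close> show False by blast
  qed
  have same: "E x t \<longleftrightarrow> E y t" if "edge_equiv E p (x, y)" "t \<notin> ?S" for x y t
    using adj[OF that] adj[OF rev[OF that(1)] that(2)] by blast
  have "\<forall>t. t \<notin> ?S \<longrightarrow> (E (fst q) t \<longleftrightarrow> E (fst p) t) \<and> (E (snd q) t \<longleftrightarrow> E (fst p) t)"
    if "edge_equiv E p q" for q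
    using that
  proof (induction rule: rtranclp_induct)
    case base
    then show ?case using same[of "fst p" "snd p"] by auto
  next
    case (step q r)
    from step(2) show ?case
    proof cases
      case (flip x y)
      then show ?thesis using step.IH by auto
    next
      case (pivot x y z)
      then have "edge_equiv E p (x, z)" using step(1,2) by auto
      then show ?thesis using step.IH pivot same[of x z] by auto
    qed
  qed
  then show ?thesis
    unfolding graph_module_def nbhd_outside_def edge_class_vertices_def by fastforce
qed

lemma not_KBe_connected_module:
  assumes conn: "connected_graph V E" and "\<not> KBe_connected V E"
  shows "\<exists>S. S \<subset> V \<and> graph_module V E S \<and> (\<exists>u\<in>S. \<exists>w\<in>S. E u w)"
proof -
  have "\<not> (\<forall>u v w. E u v \<longrightarrow> E u w \<longrightarrow> edge_equiv E (u, v) (u, w))"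
  proof
    assume local: "\<forall>u v w. E u v \<longrightarrow> E u w \<longrightarrow> edge_equiv E (u, v) (u, w)"
    have "edge_equiv E p q" if "E (fst p) (snd p)" "E (fst q) (snd q)" for p q
    proof -
      have "edge_equiv E (fst p, snd p) (fst q, snd q)"
        by (rule edges_equiv_if_locally_equiv[OF conn]) (use local that in auto)
      then show ?thesis by simp
    qed
    then show False using KBe_connected_if_edges_equiv assms(2) by blast
  qed
  then obtain u v w where "E u v" "E u w" "\<not> edge_equiv E (u, v) (u, w)" by blast
  then obtain a b c where abc: "E a b" "E a c" "E b c"
    "\<not> edge_equiv E (b, c) (a, b)" "\<not> edge_equiv E (b, c) (a, c)"
    by (rule separated_triangle)
  let ?S = "edge_class_vertices E (b, c)"
  have "?S \<subseteq> V"
  proof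
    fix x assume "x \<in> ?S"
    then obtain y where "edge_equiv E (b, c) (x, y)" unfolding edge_class_vertices_def by blast
    then have "E x y" using edge_equiv_edge abc(3) by fastforce
    then show "x \<in> V" using edge_vertices by blast
  qed
  moreover have "a \<in> V - ?S" using apex_not_in_edge_class[OF abc(1,2,4,5)] edge_vertices abc(1) by blast
  moreover have "b \<in> ?S" "c \<in> ?S"
    using edge_equiv_flip[OF abc(3)] unfolding edge_class_vertices_def by blast+
  moreover have "graph_module V E ?S" using edge_class_vertices_module abc(3) by simp
  ultimately show ?thesis using abc(3) by blast
qed

end

theorem theorem1:
  fixes V :: "'a set" and E :: "'a \<Rightarrow> 'a \<Rightarrow> bool"
  assumes "simple_graph V E" and "connected_graph V E"
  shows "KBe_connected V E \<longleftrightarrow>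
    \<not> (\<exists>S. S \<subset> V
          \<and> (\<forall>v\<in>S. \<forall>w\<in>S. nbhd_outside V E S v = nbhd_outside V E S w)
          \<and> (\<exists>u\<in>S. \<exists>w\<in>S. E u w))"
proof -
  interpret finite_simple_graph V E
    using assms(1) by (rule simple_graph_imp_finite_simple_graph)
  show ?thesis
    using module_not_KBe_connected[OF assms(2)] not_KBe_connected_module[OF assms(2)]
    unfolding graph_module_def by blast
qed

end
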